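(* Let $a,b>0$, $I=[g(b),b]$, $J=[f(a),a]$, and let $g$ and $f$ be decreasing homeomorphisms of $I$ and $J$ onto their images $g(I)\subseteq I$ and $f(J)\subseteq J$ such that (1) $0$ is an attracting fixed point of both $f$ and $g$; (2) $g^2(x)<x$ for all $x\in(0,b]$; (3) $f^2(x)<x$ for all $x\in(0,a]$. Then there exists a (not necessarily unique) homeomorphism $h:[f(a),a]\to[g(b),b]$ such that $g(h(x))=h(f(x))$ for all $x\in[f(a),a]$.
   Context: A fixed point $p$ of a homeomorphism $\phi$ is attracting if there is a neighbourhood $U$ of $p$ with $\phi^n(x)\to p$ for all $x\in U$. $\phi^2$ denotes $\phi\circ\phi$. *)

theory Defs
  imports "HOL-Analysis.Analysis"
begin

definition attracting_fixed_point :: "(real \<Rightarrow> real) \<Rightarrow> real set \<Rightarrow> real \<Rightarrow> bool" where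
  "attracting_fixed_point \<phi> S p \<longleftrightarrow> p \<in> S \<and> \<phi> p = p \<and>
     (\<exists>U. open U \<and> p \<in> U \<and> (\<forall>x\<in>U \<inter> S. (\<lambda>n. (\<phi> ^^ n) x) \<longlonglongrightarrow> p))"

end

theory Submission
  imports Defs
begin

text \<open>Since \<open>f\<close> and \<open>g\<close> are decreasing with \<open>f\<^sup>2 < id\<close> and \<open>g\<^sup>2 < id\<close> on the positive
  half, \<open>f\<^sup>2\<close> and \<open>g\<^sup>2\<close> are increasing contractions of \<open>[0, a]\<close> and \<open>[0, b]\<close> towards \<open>0\<close>.
  Two such contractions \<open>F\<close>, \<open>G\<close> are conjugate: match the fundamental domains \<open>(F a, a]\<close> and
  \<open>(G b, b]\<close> by any increasing bijection and transport it along the orbits. Since \<open>f\<close> maps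
  \<open>(0, a]\<close> onto \<open>[f a, 0)\<close>, a conjugacy \<open>H\<close> of the squares extends to \<open>[f a, a]\<close> by
  \<open>h (f y) = g (H y)\<close>. The result is an increasing bijection of compact intervals, hence a
  homeomorphism.\<close>

lemma strict_mono_on_Icc_onto_endpoints:
  fixes h :: "'a::linorder \<Rightarrow> 'b::linorder"
  assumes mono: "strict_mono_on {c..d} h" and onto: "h ` {c..d} = {e..f}" and "c \<le> d"
  shows "h c = e" and "h d = f"
proof -
  have hc: "h c \<in> {e..f}" and hd: "h d \<in> {e..f}" using onto \<open>c \<le> d\<close> by auto
  then have "e \<in> h ` {c..d}" "f \<in> h ` {c..d}" unfolding onto by auto
  then obtain x y where x: "x \<in> {c..d}" "h x = e" and y: "y \<in> {c..d}" "h y = f" by blast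
  have "h c \<le> h x" "h y \<le> h d"
    using x(1) y(1) \<open>c \<le> d\<close> by (auto intro!: strict_mono_on_leD[OF mono])
  then show "h c = e" "h d = f" using hc hd x y by auto
qed

text \<open>Extending \<open>h\<close> by translates of the identity outside \<open>[c, d]\<close> gives a monotone surjection
  of the real line, which is continuous.\<close>
lemma strict_mono_on_Icc_onto_continuous:
  fixes h :: "real \<Rightarrow> real"
  assumes mono: "strict_mono_on {c..d} h" and onto: "h ` {c..d} = {e..f}" and "c \<le> d"
  shows "continuous_on {c..d} h"
proof -
  define k where "k x = (if x < c then x - c + e else if d < x then x - d + f else h x)" for x
  have h_mem: "h x \<in> {e..f}" if "x \<in> {c..d}" for x using that onto by blast
  then have "e \<le> f" using \<open>c \<le> d\<close> by fastforce
  have k_mono: "k x \<le> k y" if "x \<le> y" for x y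
  proof -
    have "h x \<le> h y" if "x \<in> {c..d}" "y \<in> {c..d}" "x \<le> y"
      using strict_mono_on_leD[OF mono] that by blast
    then show ?thesis
      using \<open>x \<le> y\<close> h_mem[of x] h_mem[of y] \<open>e \<le> f\<close> unfolding k_def by (auto simp: not_less)
  qed
  have "z \<in> range k" for z
  proof -
    consider "z < e" | "f < z" | "z \<in> {e..f}" by force
    then show ?thesis
    proof cases
      case 1
      then have "k (z - e + c) = z" unfolding k_def by auto
      then show ?thesis by (metis rangeI)
    next
      case 2
      then have "k (z - f + d) = z" unfolding k_def using \<open>e \<le> f\<close> \<open>c \<le> d\<close> by auto
      then show ?thesis by (metis rangeI)
    next
      case 3
      then obtain x where "x \<in> {c..d}" "h x = z" using onto by (metis imageE)
      then have "k x = z" unfolding k_def by auto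
      then show ?thesis by (metis rangeI)
    qed
  qed
  then have "range k = UNIV" by blast
  with k_mono have "continuous_on UNIV k" by (intro continuous_onI_mono) auto
  then have "continuous_on {c..d} k" by (rule continuous_on_subset) auto
  then show ?thesis by (rule continuous_on_cong[THEN iffD1, rotated 2]) (auto simp: k_def)
qed

lemma strict_mono_on_Icc_onto_homeomorphism:
  fixes h :: "real \<Rightarrow> real"
  assumes mono: "strict_mono_on {c..d} h" and onto: "h ` {c..d} = {e..f}" and "c \<le> d"
  obtains h' where "homeomorphism {c..d} {e..f} h h'"
  using homeomorphism_compact[OF compact_Icc strict_mono_on_Icc_onto_continuous[OF assms]
      onto strict_mono_on_imp_inj_on[OF mono]] by blast

lemma ex_strict_mono_onto_Ioc:
  fixes c d e f :: real
  assumes "c < d" and "e < f"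
  obtains \<phi> where "strict_mono \<phi>" and "\<phi> ` {c<..d} = {e<..f}"
proof
  define m where "m = (f - e) / (d - c)"
  have "m > 0" using assms by (simp add: m_def)
  show "strict_mono (\<lambda>x. e + m * (x - c))"
    using \<open>m > 0\<close> by (intro strict_monoI) simp
  have "e + m * (x - c) \<in> {e<..f}" if "x \<in> {c<..d}" for x
  proof -
    have "m * (x - c) \<le> m * (d - c)" using that \<open>m > 0\<close> by (intro mult_left_mono) auto
    then show ?thesis using that \<open>m > 0\<close> assms by (auto simp: m_def)
  qed
  moreover have "z \<in> (\<lambda>x. e + m * (x - c)) ` {c<..d}" if "z \<in> {e<..f}" for z
  proof
    show "z = e + m * (c + (z - e) / m - c)" using \<open>m > 0\<close> by simp
    have "(z - e) / m \<le> (f - e) / m" using that \<open>m > 0\<close> by (simp add: divide_right_mono)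
    also have "\<dots> = d - c" using assms by (simp add: m_def)
    finally have "(z - e) / m \<le> d - c" .
    then show "c + (z - e) / m \<in> {c<..d}" using that \<open>m > 0\<close> by auto
  qed
  ultimately show "(\<lambda>x. e + m * (x - c)) ` {c<..d} = {e<..f}" by blast
qed

locale increasing_contraction =
  fixes F :: "real \<Rightarrow> real" and a :: real
  assumes pos: "0 < a"
    and continuous: "continuous_on {0..a} F"
    and strict_mono: "strict_mono_on {0..a} F"
    and fixes_zero: "F 0 = 0"
    and below_diagonal: "\<And>x. x \<in> {0<..a} \<Longrightarrow> F x < x"
begin

lemma maps_Ioc: "x \<in> {0<..a} \<Longrightarrow> F x \<in> {0<..a}"
  using strict_mono_onD[OF strict_mono, of 0 x] below_diagonal[of x] fixes_zero by auto

lemma maps_Icc: "x \<in> {0..a} \<Longrightarrow> F x \<in> {0..a}"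
  using maps_Ioc[of x] fixes_zero by (cases "x = 0") auto

lemma funpow_Ioc: "x \<in> {0<..a} \<Longrightarrow> (F^^n) x \<in> {0<..a}"
  by (induction n) (auto simp del: greaterThanAtMost_iff intro: maps_Ioc)

lemma funpow_Icc: "x \<in> {0..a} \<Longrightarrow> (F^^n) x \<in> {0..a}"
  by (induction n) (auto simp del: atLeastAtMost_iff intro: maps_Icc)

lemma strict_mono_on_funpow: "strict_mono_on {0..a} (F^^n)"
proof (induction n)
  case (Suc n)
  show ?case
    by (rule strict_mono_onI)
      (auto intro!: strict_mono_onD[OF strict_mono] strict_mono_onD[OF Suc] funpow_Icc
        simp del: atLeastAtMost_iff)
qed (simp add: strict_mono_on_ident)

lemma continuous_on_funpow: "continuous_on {0..a} (F^^n)"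
proof (induction n)
  case (Suc n)
  have "continuous_on {0..a} (F \<circ> (F^^n))"
    by (rule continuous_on_compose[OF Suc continuous_on_subset[OF continuous]])
      (auto intro: funpow_Icc simp del: atLeastAtMost_iff)
  then show ?case by simp
qed simp

lemma decseq_orbit: "decseq (\<lambda>n. (F^^n) a)"
  using below_diagonal funpow_Ioc pos by (intro decseq_SucI) (auto intro: less_imp_le)

lemma orbit_tendsto_zero: "(\<lambda>n. (F^^n) a) \<longlonglongrightarrow> 0"
proof -
  have orbit_mem: "(F^^n) a \<in> {0..a}" for n using funpow_Icc pos by simp
  then have "\<forall>n. 0 \<le> (F^^n) a" by simp
  then obtain L where L: "(\<lambda>n. (F^^n) a) \<longlonglongrightarrow> L"
    using decseq_convergent[OF decseq_orbit] by blast
  have L_mem: "L \<in> {0..a}"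
    using closed_sequentially[OF closed_atLeastAtMost orbit_mem L] .
  have "(\<lambda>n. F ((F^^n) a)) \<longlonglongrightarrow> F L"
    using continuous_on_tendsto_compose[OF continuous L L_mem] orbit_mem
    by (simp add: always_eventually)
  moreover have "(\<lambda>n. F ((F^^n) a)) \<longlonglongrightarrow> L"
    using LIMSEQ_Suc[OF L] by simp
  ultimately have "F L = L" by (rule LIMSEQ_unique)
  then have "L = 0" using below_diagonal[of L] L_mem by fastforce
  then show ?thesis using L by simp
qed

text \<open>\<open>{F a<..a}\<close> is a fundamental domain: the sets \<open>(F^^n) ` {F a<..a}\<close> tile \<open>{0<..a}\<close>
  from right to left.\<close>

lemma funpow_fundamental_domain:
  assumes "y \<in> {F a<..a}"
  shows "(F^^n) y \<in> {(F^^Suc n) a<..(F^^n) a}"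
proof -
  have "F a \<in> {0..a}" "y \<in> {0..a}" using maps_Icc[of a] pos assms by auto
  then have "(F^^n) (F a) < (F^^n) y" "(F^^n) y \<le> (F^^n) a"
    using assms pos by (auto intro!: strict_mono_onD[OF strict_mono_on_funpow]
        strict_mono_on_leD[OF strict_mono_on_funpow])
  then show ?thesis by (simp add: funpow_swap1)
qed

lemma funpow_fundamental_domain_less_iff:
  assumes y: "y \<in> {F a<..a}" and y': "y' \<in> {F a<..a}"
  shows "(F^^n) y < (F^^m) y' \<longleftrightarrow> m < n \<or> (n = m \<and> y < y')"
proof -
  note range = funpow_fundamental_domain[OF y, of n] funpow_fundamental_domain[OF y', of m]
  consider "m < n" | "n = m" | "n < m" by linarith
  then show ?thesis
  proof cases
    case 1
    then show ?thesis using range decseqD[OF decseq_orbit, of "Suc m" n] by auto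
  next
    case 2
    have "y \<in> {0..a}" "y' \<in> {0..a}" using y y' maps_Icc[of a] pos by auto
    then show ?thesis using 2 strict_mono_on_less[OF strict_mono_on_funpow] by auto
  next
    case 3
    then show ?thesis using range decseqD[OF decseq_orbit, of "Suc n" m] by auto
  qed
qed

lemma funpow_fundamental_domain_eqD:
  assumes "y \<in> {F a<..a}" "y' \<in> {F a<..a}" "(F^^n) y = (F^^m) y'"
  shows "n = m" and "y = y'"
  using funpow_fundamental_domain_less_iff[OF assms(1,2), of n m]
    funpow_fundamental_domain_less_iff[OF assms(2,1), of m n] assms(3)
  by auto

lemma fundamental_domain_orbit:
  assumes x: "x \<in> {0<..a}"
  obtains n y where "y \<in> {F a<..a}" "(F^^n) y = x"
proof -
  have "\<exists>n. (F^^n) a < x"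
    using order_tendstoD(2)[OF orbit_tendsto_zero, of x] x by (auto simp: eventually_sequentially)
  then obtain n where n: "x \<le> (F^^n) a" "(F^^Suc n) a < x"
    using exists_least_lemma[of "\<lambda>n. (F^^n) a < x"] x by (auto simp: not_less)
  have "continuous_on {F a..a} (F^^n)"
    using maps_Icc[of a] pos by (intro continuous_on_subset[OF continuous_on_funpow]) auto
  then obtain y where y: "F a \<le> y" "y \<le> a" "(F^^n) y = x"
    using IVT'[of "F^^n" "F a" x a] n maps_Ioc[of a] pos by (auto simp: funpow_swap1)
  moreover have "y \<noteq> F a" using y n by (auto simp: funpow_swap1)
  ultimately show thesis using that[of y n] by auto
qed

end

locale increasing_contraction_pair =
  F: increasing_contraction F a + G: increasing_contraction G b
  for F :: "real \<Rightarrow> real" and a :: real and G :: "real \<Rightarrow> real" and b :: real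
begin

definition domain_map :: "real \<Rightarrow> real" where
  "domain_map = (SOME \<phi>. strict_mono \<phi> \<and> \<phi> ` {F a<..a} = {G b<..b})"

lemma domain_map: "strict_mono domain_map" "domain_map ` {F a<..a} = {G b<..b}"
proof -
  obtain \<phi> :: "real \<Rightarrow> real" where "strict_mono \<phi> \<and> \<phi> ` {F a<..a} = {G b<..b}"
    using ex_strict_mono_onto_Ioc F.below_diagonal[of a] G.below_diagonal[of b] F.pos G.pos
    by (metis greaterThanAtMost_iff order_refl)
  then show "strict_mono domain_map" "domain_map ` {F a<..a} = {G b<..b}"
    unfolding domain_map_def by (metis (mono_tags, lifting) someI_ex)+
qed

lemma domain_map_mem: "y \<in> {F a<..a} \<Longrightarrow> domain_map y \<in> {G b<..b}"
  using domain_map(2) by blast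

definition conjugacy :: "real \<Rightarrow> real" where
  "conjugacy x = (if x = 0 then 0 else
     THE z. \<exists>n. \<exists>y\<in>{F a<..a}. (F^^n) y = x \<and> z = (G^^n) (domain_map y))"

lemma conjugacy_funpow:
  assumes y: "y \<in> {F a<..a}"
  shows "conjugacy ((F^^n) y) = (G^^n) (domain_map y)"
proof -
  have "(F^^n) y \<noteq> 0" using F.funpow_Ioc[of y n] F.maps_Ioc[of a] F.pos y by auto
  moreover have "(THE z. \<exists>m. \<exists>y'\<in>{F a<..a}. (F^^m) y' = (F^^n) y \<and> z = (G^^m) (domain_map y'))
      = (G^^n) (domain_map y)"
  proof (rule the_equality)
    fix z assume "\<exists>m. \<exists>y'\<in>{F a<..a}. (F^^m) y' = (F^^n) y \<and> z = (G^^m) (domain_map y')"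
    then obtain m y' where "y' \<in> {F a<..a}" "(F^^m) y' = (F^^n) y" "z = (G^^m) (domain_map y')"
      by blast
    then show "z = (G^^n) (domain_map y)" using F.funpow_fundamental_domain_eqD[OF _ y] by blast
  qed (use y in blast)
  ultimately show ?thesis unfolding conjugacy_def by simp
qed

lemma conjugacy_Ioc: "x \<in> {0<..a} \<Longrightarrow> conjugacy x \<in> {0<..b}"
proof (elim F.fundamental_domain_orbit)
  fix n y assume y: "y \<in> {F a<..a}" and x: "(F^^n) y = x"
  have "domain_map y \<in> {0<..b}" using domain_map_mem[OF y] G.maps_Ioc[of b] G.pos by auto
  then show "conjugacy x \<in> {0<..b}" using G.funpow_Ioc conjugacy_funpow[OF y] x by metis
qed

lemma strict_mono_on_conjugacy: "strict_mono_on {0..a} conjugacy"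
proof (rule strict_mono_onI)
  fix x x' assume x: "x \<in> {0..a}" and x': "x' \<in> {0..a}" and "x < x'"
  then have "x' \<in> {0<..a}" by auto
  show "conjugacy x < conjugacy x'"
  proof (cases "x = 0")
    case True
    then show ?thesis using conjugacy_Ioc[OF \<open>x' \<in> {0<..a}\<close>] by (simp add: conjugacy_def)
  next
    case False
    with x have "x \<in> {0<..a}" by auto
    then obtain n y where y: "y \<in> {F a<..a}" "(F^^n) y = x" by (rule F.fundamental_domain_orbit)
    obtain m y' where y': "y' \<in> {F a<..a}" "(F^^m) y' = x'"
      using F.fundamental_domain_orbit[OF \<open>x' \<in> {0<..a}\<close>] by blast
    have "(F^^n) y < (F^^m) y'" using \<open>x < x'\<close> y(2) y'(2) by simp
    then have "m < n \<or> (n = m \<and> y < y')"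
      using F.funpow_fundamental_domain_less_iff[OF y(1) y'(1)] by simp
    then have "m < n \<or> (n = m \<and> domain_map y < domain_map y')"
      using domain_map(1) by (auto simp: strict_mono_less)
    then show ?thesis
      using G.funpow_fundamental_domain_less_iff[OF domain_map_mem[OF y(1)] domain_map_mem[OF y'(1)]]
        conjugacy_funpow[OF y(1), of n] conjugacy_funpow[OF y'(1), of m] y(2) y'(2) by simp
  qed
qed

lemma conjugacy_image: "conjugacy ` {0..a} = {0..b}"
proof
  have "conjugacy x \<in> {0..b}" if "x \<in> {0..a}" for x
    using conjugacy_Ioc[of x] that G.pos by (cases "x = 0") (auto simp: conjugacy_def)
  then show "conjugacy ` {0..a} \<subseteq> {0..b}" by blast
next
  show "{0..b} \<subseteq> conjugacy ` {0..a}"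
  proof
    fix z assume z: "z \<in> {0..b}"
    show "z \<in> conjugacy ` {0..a}"
    proof (cases "z = 0")
      case True
      then show ?thesis using F.pos by (force simp: conjugacy_def)
    next
      case False
      with z have "z \<in> {0<..b}" by auto
      then obtain m w where w: "w \<in> {G b<..b}" "(G^^m) w = z" by (rule G.fundamental_domain_orbit)
      then obtain y where y: "y \<in> {F a<..a}" "w = domain_map y" using domain_map(2) by blast
      have "(F^^m) y \<in> {0..a}" using F.funpow_Ioc[of y m] y(1) F.maps_Ioc[of a] F.pos by auto
      then show ?thesis using conjugacy_funpow[OF y(1), of m] y(2) w(2) by (metis image_eqI)
    qed
  qed
qed

lemma conjugacy_intertwines: "x \<in> {0..a} \<Longrightarrow> conjugacy (F x) = G (conjugacy x)"
proof (cases "x = 0")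
  case False
  assume "x \<in> {0..a}"
  with False have "x \<in> {0<..a}" by auto
  then obtain n y where y: "y \<in> {F a<..a}" "(F^^n) y = x" by (rule F.fundamental_domain_orbit)
  then show ?thesis using conjugacy_funpow[OF y(1), of "Suc n"] conjugacy_funpow[OF y(1), of n] by simp
qed (simp add: conjugacy_def F.fixes_zero G.fixes_zero)

end

lemma increasing_contractions_conjugate:
  assumes "increasing_contraction F a" and "increasing_contraction G b"
  obtains H where "strict_mono_on {0..a} H" and "H ` {0..a} = {0..b}"
    and "\<And>x. x \<in> {0..a} \<Longrightarrow> H (F x) = G (H x)"
proof -
  interpret increasing_contraction_pair F a G b
    using assms by (simp add: increasing_contraction_pair_def)
  show thesis using that strict_mono_on_conjugacy conjugacy_image conjugacy_intertwines .
qed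

locale decreasing_map =
  fixes \<phi> :: "real \<Rightarrow> real" and c :: real
  assumes pos: "0 < c"
    and continuous: "continuous_on {\<phi> c..c} \<phi>"
    and strict_antimono: "strict_antimono_on {\<phi> c..c} \<phi>"
    and maps_into: "\<phi> ` {\<phi> c..c} \<subseteq> {\<phi> c..c}"
    and zero_mem: "0 \<in> {\<phi> c..c}"
    and fixes_zero: "\<phi> 0 = 0"
    and square_below_diagonal: "\<And>x. x \<in> {0<..c} \<Longrightarrow> \<phi> (\<phi> x) < x"
begin

lemma Icc_subset: "{0..c} \<subseteq> {\<phi> c..c}"
  using zero_mem by auto

lemma strict_antimonoD: "x \<in> {\<phi> c..c} \<Longrightarrow> y \<in> {\<phi> c..c} \<Longrightarrow> x < y \<Longrightarrow> \<phi> y < \<phi> x"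
  using strict_antimono by (rule monotone_onD)

lemma strict_antimono_less_iff: "x \<in> {\<phi> c..c} \<Longrightarrow> y \<in> {\<phi> c..c} \<Longrightarrow> \<phi> x < \<phi> y \<longleftrightarrow> y < x"
  using strict_antimonoD[of x y] strict_antimonoD[of y x] by (cases x y rule: linorder_cases) auto

lemma endpoint_neg: "\<phi> c < 0"
  using strict_antimonoD[of 0 c] zero_mem pos fixes_zero by auto

lemma bij_betw_Ioc_Ico: "bij_betw \<phi> {0<..c} {\<phi> c..<0}"
proof (rule bij_betw_imageI)
  have "inj_on \<phi> {\<phi> c..c}" using strict_antimono by (simp add: strict_antimono_iff_antimono)
  then show "inj_on \<phi> {0<..c}" by (rule inj_on_subset) (use Icc_subset in auto)
  have "\<phi> x \<in> {\<phi> c..<0}" if x: "x \<in> {0<..c}" for x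
  proof -
    have "0 \<in> {\<phi> c..c}" "x \<in> {\<phi> c..c}" "c \<in> {\<phi> c..c}" using x zero_mem by auto
    then have "\<phi> x < 0" "\<phi> c \<le> \<phi> x"
      using strict_antimonoD[of 0 x] strict_antimonoD[of x c] x fixes_zero by (auto simp: le_less)
    then show ?thesis by simp
  qed
  moreover have "x \<in> \<phi> ` {0<..c}" if x: "x \<in> {\<phi> c..<0}" for x
  proof -
    obtain y where y: "0 \<le> y" "y \<le> c" "\<phi> y = x"
      using IVT2'[of \<phi> c x 0] continuous_on_subset[OF continuous Icc_subset] x pos fixes_zero
      by auto
    then have "y \<noteq> 0" using x fixes_zero by auto
    then show ?thesis using y by auto
  qed
  ultimately show "\<phi> ` {0<..c} = {\<phi> c..<0}" by blast
qed

lemma maps_Ioc_Ico: "x \<in> {0<..c} \<Longrightarrow> \<phi> x \<in> {\<phi> c..<0}"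
  using bij_betw_apply[OF bij_betw_Ioc_Ico] .

lemma domain_cases:
  assumes x: "x \<in> {\<phi> c..c}"
  obtains "x \<in> {0..c}" | y where "y \<in> {0<..c}" and "x = \<phi> y"
proof (cases "0 \<le> x")
  case False
  with x have "x \<in> \<phi> ` {0<..c}" using bij_betw_imp_surj_on[OF bij_betw_Ioc_Ico] by auto
  then show thesis using that(2) by blast
qed (use x that(1) in auto)

lemma increasing_contraction_square: "increasing_contraction (\<lambda>x. \<phi> (\<phi> x)) c"
proof
  have "continuous_on {0..c} (\<phi> \<circ> \<phi>)"
    using maps_into Icc_subset
    by (intro continuous_on_compose continuous_on_subset[OF continuous]) auto
  then show "continuous_on {0..c} (\<lambda>x. \<phi> (\<phi> x))" by (simp add: o_def)
  show "strict_mono_on {0..c} (\<lambda>x. \<phi> (\<phi> x))"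
  proof (rule strict_mono_onI)
    fix x y assume "x \<in> {0..c}" "y \<in> {0..c}" "x < y"
    then have "x \<in> {\<phi> c..c}" "y \<in> {\<phi> c..c}" "x < y" using Icc_subset by auto
    then have "\<phi> y < \<phi> x" "\<phi> x \<in> {\<phi> c..c}" "\<phi> y \<in> {\<phi> c..c}"
      using strict_antimonoD maps_into by (blast, blast, blast)
    then show "\<phi> (\<phi> x) < \<phi> (\<phi> y)" using strict_antimonoD by blast
  qed
qed (use pos fixes_zero square_below_diagonal in auto)

end

locale square_conjugacy =
  f: decreasing_map f a + g: decreasing_map g b
  for f :: "real \<Rightarrow> real" and a :: real and g :: "real \<Rightarrow> real" and b :: real +
  fixes H :: "real \<Rightarrow> real"
  assumes strict_mono_H: "strict_mono_on {0..a} H"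
    and image_H: "H ` {0..a} = {0..b}"
    and H_intertwines: "\<And>x. x \<in> {0..a} \<Longrightarrow> H (f (f x)) = g (g (H x))"
begin

lemma H_zero: "H 0 = 0"
  using strict_mono_on_Icc_onto_endpoints(1)[OF strict_mono_H image_H] f.pos by simp

lemma H_Ioc: "x \<in> {0<..a} \<Longrightarrow> H x \<in> {0<..b}"
  using strict_mono_onD[OF strict_mono_H, of 0 x] image_H H_zero by auto

text \<open>On \<open>[f a, 0)\<close> the conjugacy is forced by \<open>h (f y) = g (h y)\<close>.\<close>
definition extension :: "real \<Rightarrow> real" where
  "extension x = (if 0 \<le> x then H x else g (H (the_inv_into {0<..a} f x)))"

lemma extension_nonneg: "0 \<le> x \<Longrightarrow> extension x = H x"
  by (simp add: extension_def)

lemma extension_f: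
  assumes y: "y \<in> {0<..a}"
  shows "extension (f y) = g (H y)"
proof -
  have "f y < 0" using f.maps_Ioc_Ico[OF y] by simp
  moreover have "the_inv_into {0<..a} f (f y) = y"
    using the_inv_into_f_f[OF bij_betw_imp_inj_on[OF f.bij_betw_Ioc_Ico] y] .
  ultimately show ?thesis by (simp add: extension_def)
qed

lemma strict_mono_on_extension: "strict_mono_on {f a..a} extension"
proof (rule strict_mono_onI)
  fix x x' assume x: "x \<in> {f a..a}" and x': "x' \<in> {f a..a}" and "x < x'"
  show "extension x < extension x'"
  proof (cases rule: f.domain_cases[OF x'])
    case 1
    then have "0 \<le> extension x'" using image_H by (auto simp: extension_nonneg)
    show ?thesis
    proof (cases rule: f.domain_cases[OF x])
      case 1
      then show ?thesis using \<open>x' \<in> {0..a}\<close> \<open>x < x'\<close> strict_mono_onD[OF strict_mono_H]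
        by (simp add: extension_nonneg)
    next
      case (2 y)
      then have "extension x < 0" using g.maps_Ioc_Ico[OF H_Ioc] by (simp add: extension_f)
      then show ?thesis using \<open>0 \<le> extension x'\<close> by simp
    qed
  next
    case (2 y')
    then have "x < 0" using \<open>x < x'\<close> f.maps_Ioc_Ico[of y'] by auto
    then obtain y where y: "y \<in> {0<..a}" "x = f y" by (cases rule: f.domain_cases[OF x]) auto
    have "y \<in> {f a..a}" "y' \<in> {f a..a}" using y(1) 2(1) f.Icc_subset by auto
    then have "y' < y" using f.strict_antimono_less_iff[of y y'] \<open>x < x'\<close> y(2) 2(2) by simp
    then have "H y' < H y" using y(1) 2(1) strict_mono_onD[OF strict_mono_H] by simp
    moreover have "H y \<in> {g b..b}" "H y' \<in> {g b..b}" using H_Ioc y(1) 2(1) g.Icc_subset by force+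
    ultimately have "g (H y) < g (H y')" using g.strict_antimonoD by blast
    then show ?thesis using y 2 by (simp add: extension_f)
  qed
qed

lemma image_extension: "extension ` {f a..a} = {g b..b}"
proof
  show "extension ` {f a..a} \<subseteq> {g b..b}"
  proof
    fix z assume "z \<in> extension ` {f a..a}"
    then obtain x where x: "x \<in> {f a..a}" "z = extension x" by blast
    show "z \<in> {g b..b}"
    proof (cases rule: f.domain_cases[OF x(1)])
      case 1
      then have "z = H x" "H x \<in> {0..b}" using x(2) image_H by (auto simp: extension_nonneg)
      then show ?thesis using g.Icc_subset by blast
    next
      case (2 y)
      then have "z = g (H y)" using x(2) by (simp add: extension_f)
      moreover have "g (H y) \<in> {g b..<0}" using g.maps_Ioc_Ico[OF H_Ioc[OF 2(1)]] .
      ultimately show ?thesis using g.pos by simp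
    qed
  qed
  show "{g b..b} \<subseteq> extension ` {f a..a}"
  proof
    fix z assume z: "z \<in> {g b..b}"
    show "z \<in> extension ` {f a..a}"
    proof (cases rule: g.domain_cases[OF z])
      case 1
      then have "z \<in> H ` {0..a}" by (simp add: image_H)
      then obtain x where x: "x \<in> {0..a}" "z = H x" by blast
      then have "x \<in> {f a..a}" using f.Icc_subset by blast
      moreover have "extension x = z" using x by (simp add: extension_nonneg)
      ultimately show ?thesis by blast
    next
      case (2 w)
      then have "w \<in> H ` {0..a}" by (simp add: image_H)
      then obtain y where y: "y \<in> {0..a}" "w = H y" by blast
      with 2(1) H_zero have "y \<in> {0<..a}" by (cases "y = 0") auto
      then have "f y \<in> {f a..<0}" by (rule f.maps_Ioc_Ico)
      then have "f y \<in> {f a..a}" using f.pos by simp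
      moreover have "extension (f y) = z" using \<open>y \<in> {0<..a}\<close> y(2) 2(2) by (simp add: extension_f)
      ultimately show ?thesis by blast
    qed
  qed
qed

lemma extension_intertwines:
  assumes x: "x \<in> {f a..a}"
  shows "g (extension x) = extension (f x)"
proof (cases rule: f.domain_cases[OF x])
  case 1
  show ?thesis
  proof (cases "x = 0")
    case True
    then show ?thesis using H_zero f.fixes_zero g.fixes_zero by (simp add: extension_nonneg)
  next
    case False
    then show ?thesis using 1 by (simp add: extension_f extension_nonneg)
  qed
next
  case (2 y)
  then have "f (f y) \<in> {0<..a}"
    using increasing_contraction.maps_Ioc[OF f.increasing_contraction_square] by blast
  then show ?thesis using 2 H_intertwines[of y] by (simp add: extension_f extension_nonneg)
qed

end

lemma decreasing_mapI:
  assumes "0 < c"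
    and "\<exists>\<phi>'. homeomorphism {\<phi> c..c} (\<phi> ` {\<phi> c..c}) \<phi> \<phi>'"
    and "antimono_on {\<phi> c..c} \<phi>"
    and "\<phi> ` {\<phi> c..c} \<subseteq> {\<phi> c..c}"
    and "attracting_fixed_point \<phi> {\<phi> c..c} 0"
    and "\<forall>x\<in>{0<..c}. \<phi> (\<phi> x) < x"
  shows "decreasing_map \<phi> c"
proof -
  obtain \<phi>' where hom: "homeomorphism {\<phi> c..c} (\<phi> ` {\<phi> c..c}) \<phi> \<phi>'" using assms(2) by blast
  have "inj_on \<phi> {\<phi> c..c}"
    using homeomorphism_apply1[OF hom] by (metis inj_on_inverseI)
  show ?thesis
  proof
    show "continuous_on {\<phi> c..c} \<phi>" using homeomorphism_cont1[OF hom] .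
    show "strict_antimono_on {\<phi> c..c} \<phi>"
      using assms(3) \<open>inj_on \<phi> {\<phi> c..c}\<close> by (simp add: strict_antimono_iff_antimono)
    show "0 \<in> {\<phi> c..c}" "\<phi> 0 = 0"
      using assms(5) unfolding attracting_fixed_point_def by blast+
  qed (use assms in auto)
qed

theorem theorem6:
  fixes f g :: "real \<Rightarrow> real" and a b :: real
  assumes "a > 0" and "b > 0"
    and g_hom: "\<exists>g'. homeomorphism {g b..b} (g ` {g b..b}) g g'"
    and g_dec: "antimono_on {g b..b} g"
    and g_into: "g ` {g b..b} \<subseteq> {g b..b}"
    and f_hom: "\<exists>f'. homeomorphism {f a..a} (f ` {f a..a}) f f'"
    and f_dec: "antimono_on {f a..a} f"
    and f_into: "f ` {f a..a} \<subseteq> {f a..a}"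
    and f_attr: "attracting_fixed_point f {f a..a} 0"
    and g_attr: "attracting_fixed_point g {g b..b} 0"
    and g2: "\<forall>x\<in>{0<..b}. g (g x) < x"
    and f2: "\<forall>x\<in>{0<..a}. f (f x) < x"
  shows "\<exists>h h'. homeomorphism {f a..a} {g b..b} h h' \<and>
           (\<forall>x\<in>{f a..a}. g (h x) = h (f x))"
proof -
  interpret f: decreasing_map f a by (rule decreasing_mapI) fact+
  interpret g: decreasing_map g b by (rule decreasing_mapI) fact+
  obtain H where H: "strict_mono_on {0..a} H" "H ` {0..a} = {0..b}"
    "\<And>x. x \<in> {0..a} \<Longrightarrow> H (f (f x)) = g (g (H x))"
    using increasing_contractions_conjugate[OF f.increasing_contraction_square
        g.increasing_contraction_square] by blast
  interpret square_conjugacy f a g b H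
    by (intro square_conjugacy.intro square_conjugacy_axioms.intro f.decreasing_map_axioms
        g.decreasing_map_axioms H)
  have "f a \<le> a" using f.endpoint_neg f.pos by simp
  then obtain h' where "homeomorphism {f a..a} {g b..b} extension h'"
    by (rule strict_mono_on_Icc_onto_homeomorphism[OF strict_mono_on_extension image_extension])
  then show ?thesis using extension_intertwines by blast
qed

end
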